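(* Let $\Sigma$ be a set with at least two elements, $\mathcal{L}=2^\Sigma$ the powerset lattice, and $r_0\in\Sigma$. Let $R:=\bigcup\{\{r\}\times(\Sigma\setminus\{r\})\,;\,r\in\Sigma\}$ and $S:=R\cup(\{r_0\}\times\Sigma)$. Then $R,S\in\Sigma'_\circledast$ (for $\mathcal{L}_1=\mathcal{L}_2=\mathcal{L}$), and $R\subsetneqq S\subsetneqq\Sigma\times\Sigma$. Consequently there is no complete atomistic coatomistic lattice $\mathcal{L}_0$ with $\mathcal{F}(\mathcal{L}_0)\cong\mathcal{F}(\mathcal{L})\otimes_C\mathcal{F}(\mathcal{L})$.
   Context: For a complete lattice: $\Sigma,\Sigma'$ atoms and coatoms, $\Sigma[a]$ atoms below $a$, $\mathsf{Cl}(\omega)=\{\Sigma[a];a\in\omega\}$, $f^\circ(b):=\bigvee\{a;f(a)\le b\}$. For lattices $\mathcal{L}_1,\mathcal{L}_2$, $\Sigma'_\circledast$ is the set of $R\subsetneqq\Sigma_1\times\Sigma_2$ such that for every $(p_1,p_2)$, $\{q_1;(q_1,p_2)\in R\}\in\mathsf{Cl}(\Sigma_1'\cup\{1\})$ and $\{q_2;(p_1,q_2)\in R\}\in\mathsf{Cl}(\Sigma_2'\cup\{1\})$. $\mathbf{Chu}_{2_0}$: objects $(A,r,X)$, $A,X$ pointed sets, $r:A\times X\to\{0,1\}$ vanishing at base points; arrows $(f,g)$, pointed $f:A\to B$, $g:Y\to X$, $s(f(a),y)=r(a,g(y))$. $(A,r,X)^\perp=(X,\check r,A)$. $\mathsf{A}_1\otimes_C\mathsf{A}_2:=(A_1\wedge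 A_2,t,\mathbf{Chu}_{2_0}(\mathsf{A}_1,\mathsf{A}_2^\perp))$, with $A\wedge B=((A\setminus\{0_A\})\times(B\setminus\{0_B\}))\cup\{0_\sharp\}$, hom-set pointed by the constant arrow, $t((a_1,a_2),(f,g))=r_1(a_1,g(a_2))$. For any complete atomistic coatomistic lattice $\mathcal{L}$, $\mathcal{F}(\mathcal{L})=(\Sigma\cup\{0\},r,\Sigma'\cup\{1\})$ pointed by $0$ and $1$, with $r(p,x)=0\iff p\le x$. *)

theory Defs
  imports "HOL-Library.FuncSet"
begin

definition atom :: "'a::complete_lattice \<Rightarrow> bool" where
  "atom a \<longleftrightarrow> a \<noteq> bot \<and> (\<forall>b. b \<le> a \<longrightarrow> b = bot \<or> b = a)"

definition coatom :: "'a::complete_lattice \<Rightarrow> bool" where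
  "coatom a \<longleftrightarrow> a \<noteq> top \<and> (\<forall>b. a \<le> b \<longrightarrow> b = top \<or> b = a)"

definition atoms :: "'a::complete_lattice set" where
  "atoms = {a. atom a}"

definition coatoms :: "'a::complete_lattice set" where
  "coatoms = {a. coatom a}"

definition atoms_below :: "'a::complete_lattice \<Rightarrow> 'a set" where
  "atoms_below a = {p \<in> atoms. p \<le> a}"

definition Cl :: "'a::complete_lattice set \<Rightarrow> 'a set set" where
  "Cl \<omega> = atoms_below ` \<omega>"

definition atomistic :: "'a::complete_lattice itself \<Rightarrow> bool" where
  "atomistic _ \<longleftrightarrow> (\<forall>x::'a. x = Sup (atoms_below x))"

definition coatomistic :: "'a::complete_lattice itself \<Rightarrow> bool" where
  "coatomistic _ \<longleftrightarrow> (\<forall>x::'a. x = Inf {c \<in> coatoms. x \<le> c})"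

text \<open>\<open>\<Sigma>'_\<circledast>\<close> for lattices L1 (type 'a) and L2 (type 'b)\<close>
definition tensor_coatoms :: "('a::complete_lattice \<times> 'b::complete_lattice) set set" where
  "tensor_coatoms = {R. R \<subseteq> atoms \<times> atoms \<and> R \<noteq> atoms \<times> atoms \<and>
      (\<forall>p1\<in>atoms. \<forall>p2\<in>atoms.
         {q1. (q1, p2) \<in> R} \<in> Cl (coatoms \<union> {top}) \<and>
         {q2. (p1, q2) \<in> R} \<in> Cl (coatoms \<union> {top}))}"

text \<open>An object (A, a0, r, X, x0): pointed sets (A,a0), (X,x0) and r : A \<times> X \<rightarrow> {0,1},
  where the value 1 is encoded as True and 0 as False.\<close>
type_synonym ('a, 'x) chu = "'a set \<times> 'a \<times> ('a \<Rightarrow> 'x \<Rightarrow> bool) \<times> 'x set \<times> 'x"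

definition chu_obj :: "('a, 'x) chu \<Rightarrow> bool" where
  "chu_obj C = (case C of (A, a0, r, X, x0) \<Rightarrow>
     a0 \<in> A \<and> x0 \<in> X \<and> (\<forall>a\<in>A. \<not> r a x0) \<and> (\<forall>x\<in>X. \<not> r a0 x))"

definition chu_arrow :: "('a, 'x) chu \<Rightarrow> ('b, 'y) chu \<Rightarrow> ('a \<Rightarrow> 'b) \<Rightarrow> ('y \<Rightarrow> 'x) \<Rightarrow> bool" where
  "chu_arrow C D f g = (case C of (A, a0, r, X, x0) \<Rightarrow> case D of (B, b0, s, Y, y0) \<Rightarrow>
     f \<in> A \<rightarrow> B \<and> f a0 = b0 \<and> g \<in> Y \<rightarrow> X \<and> g y0 = x0 \<and>
     (\<forall>a\<in>A. \<forall>y\<in>Y. s (f a) y = r a (g y)))"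

definition chu_hom :: "('a, 'x) chu \<Rightarrow> ('b, 'y) chu \<Rightarrow> (('a \<Rightarrow> 'b) \<times> ('y \<Rightarrow> 'x)) set" where
  "chu_hom C D = (case C of (A, a0, r, X, x0) \<Rightarrow> case D of (B, b0, s, Y, y0) \<Rightarrow>
     {(f, g). chu_arrow C D f g \<and> f \<in> extensional A \<and> g \<in> extensional Y})"

definition chu_dual :: "('a, 'x) chu \<Rightarrow> ('x, 'a) chu" where
  "chu_dual C = (case C of (A, a0, r, X, x0) \<Rightarrow> (X, x0, \<lambda>x a. r a x, A, a0))"

definition chu_iso :: "('a, 'x) chu \<Rightarrow> ('b, 'y) chu \<Rightarrow> bool" where
  "chu_iso C D = (case C of (A, a0, r, X, x0) \<Rightarrow> case D of (B, b0, s, Y, y0) \<Rightarrow>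
     (\<exists>f g f' g'. chu_arrow C D f g \<and> chu_arrow D C f' g' \<and>
        (\<forall>a\<in>A. f' (f a) = a) \<and> (\<forall>b\<in>B. f (f' b) = b) \<and>
        (\<forall>x\<in>X. g (g' x) = x) \<and> (\<forall>y\<in>Y. g' (g y) = y)))"

text \<open>Smash product A \<and> B, with the new base point 0_\<sharp> represented by None\<close>
definition smash :: "'a set \<Rightarrow> 'a \<Rightarrow> 'b set \<Rightarrow> 'b \<Rightarrow> ('a \<times> 'b) option set" where
  "smash A a0 B b0 = Some ` ((A - {a0}) \<times> (B - {b0})) \<union> {None}"

text \<open>A1 \<otimes>_C A2 = (A1 \<and> A2, t, Chu(A1, A2^\<bottom>)), hom-set pointed by the constant arrow\<close>
definition chu_tensor :: "('a1, 'x1) chu \<Rightarrow> ('a2, 'x2) chu \<Rightarrow>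
    (('a1 \<times> 'a2) option, ('a1 \<Rightarrow> 'x2) \<times> ('a2 \<Rightarrow> 'x1)) chu" where
  "chu_tensor C1 C2 = (case C1 of (A1, a1, r1, X1, x1) \<Rightarrow> case C2 of (A2, a2, r2, X2, x2) \<Rightarrow>
     (smash A1 a1 A2 a2, None,
      (\<lambda>p (f, g). case p of None \<Rightarrow> False | Some (b1, b2) \<Rightarrow> r1 b1 (g b2)),
      chu_hom C1 (chu_dual C2),
      (\<lambda>b\<in>A1. x2, \<lambda>b\<in>A2. x1)))"

text \<open>\<open>\<F>(L) = (\<Sigma> \<union> {0}, r, \<Sigma>' \<union> {1})\<close>, r(p,x) = 0 iff p \<le> x\<close>
definition chuF :: "('a::complete_lattice, 'a) chu" where
  "chuF = (atoms \<union> {bot}, bot, \<lambda>p x. \<not> p \<le> x, coatoms \<union> {top}, top)"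

end

theory Submission
  imports Defs
begin

(* In F(L0) the zero set of a point x of the second component is {0} together with the atoms
   below x. If L0 is atomistic, inclusion of these sets is the order of L0, and since the points
   are coatoms or 1, no zero set other than the whole carrier strictly contains another one; this
   property is invariant under Chu isomorphisms. In F(L1) tensor F(L2), on the other hand, every
   R in the set of tensor coatoms is, up to the base point, the zero set of an arrow
   F(L1) -> F(L2)^perp, so a strictly nested pair R < S of tensor coatoms violates it. For the
   powerset lattice the complement of the diagonal and its union with one full row form such a
   pair. *)

definition chu_zeros :: "('a, 'x) chu \<Rightarrow> 'x \<Rightarrow> 'a set" where
  "chu_zeros C x = (case C of (A, a0, r, X, x0) \<Rightarrow> {a \<in> A. \<not> r a x})"

definition proper_zero_sets_antichain :: "('a, 'x) chu \<Rightarrow> bool" where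
  "proper_zero_sets_antichain C = (case C of (A, a0, r, X, x0) \<Rightarrow>
     \<forall>x\<in>X. \<forall>y\<in>X. chu_zeros C x \<subset> chu_zeros C y \<longrightarrow> chu_zeros C y = A)"

lemma proper_zero_sets_antichainD:
  assumes "proper_zero_sets_antichain C" and "C = (A, a0, r, X, x0)"
    and "x \<in> X" and "y \<in> X" and "chu_zeros C x \<subset> chu_zeros C y"
  shows "chu_zeros C y = A"
  using assms unfolding proper_zero_sets_antichain_def by auto

lemma chu_arrow_zeros:
  assumes "chu_arrow (A, a0, r, X, x0) (B, b0, s, Y, y0) f g" and "y \<in> Y"
  shows "chu_zeros (A, a0, r, X, x0) (g y) = {a \<in> A. f a \<in> chu_zeros (B, b0, s, Y, y0) y}"
  using assms unfolding chu_arrow_def chu_zeros_def by auto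

lemma chu_iso_proper_zero_sets_antichain:
  assumes iso: "chu_iso C D" and C: "proper_zero_sets_antichain C"
  shows "proper_zero_sets_antichain D"
proof -
  obtain A a0 r X x0 where C_eq: "C = (A, a0, r, X, x0)" by (cases C) auto
  obtain B b0 s Y y0 where D_eq: "D = (B, b0, s, Y, y0)" by (cases D) auto
  from iso obtain f g f' g' where fg: "chu_arrow C D f g" and fg': "chu_arrow D C f' g'"
    and g'g: "\<forall>y\<in>Y. g' (g y) = y"
    unfolding chu_iso_def C_eq D_eq by auto
  have g: "g \<in> Y \<rightarrow> X" and f': "f' \<in> B \<rightarrow> A"
    using fg fg' unfolding chu_arrow_def C_eq D_eq by auto
  have zeros_C: "chu_zeros C (g y) = {a \<in> A. f a \<in> chu_zeros D y}" if "y \<in> Y" for y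
    using fg that unfolding C_eq D_eq by (rule chu_arrow_zeros)
  have zeros_D: "chu_zeros D y = {b \<in> B. f' b \<in> chu_zeros C (g y)}" if "y \<in> Y" for y
  proof -
    have "g y \<in> X" using g that by auto
    with fg' have "chu_zeros D (g' (g y)) = {b \<in> B. f' b \<in> chu_zeros C (g y)}"
      unfolding C_eq D_eq by (rule chu_arrow_zeros)
    with g'g that show ?thesis by simp
  qed
  show ?thesis
    unfolding proper_zero_sets_antichain_def D_eq prod.case
  proof (intro ballI impI)
    fix y1 y2 assume y: "y1 \<in> Y" "y2 \<in> Y"
      and lt: "chu_zeros (B, b0, s, Y, y0) y1 \<subset> chu_zeros (B, b0, s, Y, y0) y2"
    have "chu_zeros C (g y1) \<subseteq> chu_zeros C (g y2)"
      using lt zeros_C[OF y(1)] zeros_C[OF y(2)] unfolding D_eq by blast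
    moreover have "chu_zeros C (g y1) \<noteq> chu_zeros C (g y2)"
      using lt zeros_D[OF y(1)] zeros_D[OF y(2)] unfolding D_eq by auto
    ultimately have "chu_zeros C (g y2) = A"
      using proper_zero_sets_antichainD[OF C C_eq] g y by blast
    then show "chu_zeros (B, b0, s, Y, y0) y2 = B"
      using zeros_D[OF y(2)] f' unfolding D_eq by auto
  qed
qed

lemma bot_notin_atoms [simp]: "bot \<notin> atoms"
  by (simp add: atoms_def atom_def)

lemma chu_zeros_chuF: "chu_zeros chuF x = insert bot (atoms_below x)"
  unfolding chu_zeros_def chuF_def atoms_below_def by auto

lemma atoms_below_top: "atoms_below top = atoms"
  by (simp add: atoms_below_def)

lemma proper_zero_sets_antichain_chuF:
  assumes atomistic: "atomistic TYPE('a::complete_lattice)"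
  shows "proper_zero_sets_antichain (chuF :: ('a, 'a) chu)"
proof -
  note Sup_atoms_below = atomistic[unfolded atomistic_def, rule_format, symmetric]
  have eq_top: "y = top" if x: "x \<in> coatoms \<union> {top}" and y: "y \<in> coatoms \<union> {top}"
    and lt: "atoms_below x \<subset> atoms_below y" for x y :: 'a
  proof (rule ccontr)
    assume "y \<noteq> top"
    have "x = Sup (atoms_below x)" by (rule Sup_atoms_below[symmetric])
    also have "\<dots> \<le> Sup (atoms_below y)" using lt by (intro Sup_subset_mono) auto
    also have "\<dots> = y" by (rule Sup_atoms_below)
    finally have "x \<le> y" .
    with \<open>y \<noteq> top\<close> have "x \<noteq> top" by (auto simp: top_unique)
    with x have "coatom x" by (simp add: coatoms_def)
    with \<open>x \<le> y\<close> \<open>y \<noteq> top\<close> have "y = x" unfolding coatom_def by blast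
    with lt show False by simp
  qed
  have strict: "atoms_below x \<subset> atoms_below y"
    if "insert bot (atoms_below x) \<subset> insert bot (atoms_below y)" for x y :: 'a
    using that bot_notin_atoms unfolding atoms_below_def by blast
  show ?thesis
    unfolding proper_zero_sets_antichain_def chu_zeros_chuF
    unfolding chuF_def prod.case
  proof (intro ballI impI)
    fix x y :: 'a
    assume x: "x \<in> coatoms \<union> {top}" and y: "y \<in> coatoms \<union> {top}"
      and lt: "insert bot (atoms_below x) \<subset> insert bot (atoms_below y)"
    from eq_top[OF x y strict[OF lt]] show "insert bot (atoms_below y) = atoms \<union> {bot}"
      by (simp add: atoms_below_top)
  qed
qed

definition Cl_rep :: "'a::complete_lattice set \<Rightarrow> 'a" where
  "Cl_rep Q = (SOME c. c \<in> coatoms \<union> {top} \<and> atoms_below c = Q)"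

lemma Cl_rep:
  assumes "Q \<in> Cl (coatoms \<union> {top})"
  shows "Cl_rep Q \<in> coatoms \<union> {top}" and "atoms_below (Cl_rep Q) = Q"
proof -
  from assms have "\<exists>c. c \<in> coatoms \<union> {top} \<and> atoms_below c = Q"
    unfolding Cl_def by blast
  then show "Cl_rep Q \<in> coatoms \<union> {top}" and "atoms_below (Cl_rep Q) = Q"
    unfolding Cl_rep_def by (metis (mono_tags, lifting) someI_ex)+
qed

(* The conditions defining tensor_coatoms say precisely that every row and every column of R is
   the set of atoms below a coatom or below top; the two components pick these elements. *)
definition relation_arrow ::
    "('a::complete_lattice \<times> 'b::complete_lattice) set \<Rightarrow> ('a \<Rightarrow> 'b) \<times> ('b \<Rightarrow> 'a)" where
  "relation_arrow R =
     (\<lambda>p \<in> atoms \<union> {bot}. if p = bot then top else Cl_rep {q. (p, q) \<in> R},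
      \<lambda>q \<in> atoms \<union> {bot}. if q = bot then top else Cl_rep {p. (p, q) \<in> R})"

lemma tensor_coatoms_row_col:
  assumes R: "R \<in> tensor_coatoms"
  shows "p \<in> atoms \<Longrightarrow> {q. (p, q) \<in> R} \<in> Cl (coatoms \<union> {top})"
    and "q \<in> atoms \<Longrightarrow> {p. (p, q) \<in> R} \<in> Cl (coatoms \<union> {top})"
proof -
  \<comment> \<open>The definition quantifies over pairs of atoms, so a row condition needs an atom of the
    other factor; properness of R supplies one.\<close>
  from R obtain p0 q0 where "p0 \<in> atoms" "q0 \<in> atoms" "(p0, q0) \<notin> R"
    unfolding tensor_coatoms_def by auto
  with R show "p \<in> atoms \<Longrightarrow> {q. (p, q) \<in> R} \<in> Cl (coatoms \<union> {top})"
    and "q \<in> atoms \<Longrightarrow> {p. (p, q) \<in> R} \<in> Cl (coatoms \<union> {top})"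
    unfolding tensor_coatoms_def by blast+
qed

lemma relation_arrow_fst:
  assumes R: "R \<in> tensor_coatoms" and p: "p \<in> atoms"
  shows "fst (relation_arrow R) p \<in> coatoms \<union> {top}"
    and "atoms_below (fst (relation_arrow R) p) = {q. (p, q) \<in> R}"
proof -
  have "fst (relation_arrow R) p = Cl_rep {q. (p, q) \<in> R}"
    using p unfolding relation_arrow_def by auto
  with Cl_rep[OF tensor_coatoms_row_col(1)[OF R p]]
  show "fst (relation_arrow R) p \<in> coatoms \<union> {top}"
    and "atoms_below (fst (relation_arrow R) p) = {q. (p, q) \<in> R}" by simp_all
qed

lemma relation_arrow_snd:
  assumes R: "R \<in> tensor_coatoms" and q: "q \<in> atoms"
  shows "snd (relation_arrow R) q \<in> coatoms \<union> {top}"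
    and "atoms_below (snd (relation_arrow R) q) = {p. (p, q) \<in> R}"
proof -
  have "snd (relation_arrow R) q = Cl_rep {p. (p, q) \<in> R}"
    using q unfolding relation_arrow_def by auto
  with Cl_rep[OF tensor_coatoms_row_col(2)[OF R q]]
  show "snd (relation_arrow R) q \<in> coatoms \<union> {top}"
    and "atoms_below (snd (relation_arrow R) q) = {p. (p, q) \<in> R}" by simp_all
qed

lemma relation_arrow_in_chu_hom:
  assumes R: "R \<in> tensor_coatoms"
  shows "relation_arrow R \<in> chu_hom chuF (chu_dual chuF)"
proof -
  define f g where "f = fst (relation_arrow R)" and "g = snd (relation_arrow R)"
  have fg: "relation_arrow R = (f, g)" by (simp add: f_def g_def)
  have f_bot: "f bot = top" and g_bot: "g bot = top"
    by (simp_all add: f_def g_def relation_arrow_def)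
  have "f \<in> atoms \<union> {bot} \<rightarrow> coatoms \<union> {top}" and "g \<in> atoms \<union> {bot} \<rightarrow> coatoms \<union> {top}"
    using relation_arrow_fst(1)[OF R] relation_arrow_snd(1)[OF R] f_bot g_bot
    unfolding f_def g_def by fastforce+
  moreover have "q \<le> f p \<longleftrightarrow> p \<le> g q" if "p \<in> atoms \<union> {bot}" "q \<in> atoms \<union> {bot}" for p q
  proof (cases "p = bot \<or> q = bot")
    case True
    then show ?thesis using f_bot g_bot by auto
  next
    case False
    with that have "p \<in> atoms" "q \<in> atoms" by auto
    then show ?thesis
      using relation_arrow_fst(2)[OF R] relation_arrow_snd(2)[OF R]
      unfolding f_def g_def atoms_below_def by blast
  qed
  moreover have "f \<in> extensional (atoms \<union> {bot})" and "g \<in> extensional (atoms \<union> {bot})"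
    by (simp_all add: f_def g_def relation_arrow_def)
  ultimately show ?thesis
    unfolding fg chu_hom_def chu_arrow_def chuF_def chu_dual_def prod.case
    using f_bot g_bot by auto
qed

lemma smash_chuF:
  "smash (atoms \<union> {bot}) bot (atoms \<union> {bot}) bot = insert None (Some ` (atoms \<times> atoms))"
  by (auto simp: smash_def)

lemma chu_zeros_tensor_relation_arrow:
  assumes R: "R \<in> tensor_coatoms"
  shows "chu_zeros (chu_tensor chuF chuF) (relation_arrow R) = insert None (Some ` R)"
proof -
  have le_iff: "p \<le> snd (relation_arrow R) q \<longleftrightarrow> (p, q) \<in> R"
    if "p \<in> atoms" "q \<in> atoms" for p q
    using relation_arrow_snd(2)[OF R that(2)] that(1) unfolding atoms_below_def by blast
  have "R \<subseteq> atoms \<times> atoms"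
    using R by (simp add: tensor_coatoms_def)
  have "chu_zeros (chu_tensor chuF chuF) (relation_arrow R) =
      {z \<in> insert None (Some ` (atoms \<times> atoms)).
        case z of None \<Rightarrow> True | Some (p, q) \<Rightarrow> p \<le> snd (relation_arrow R) q}"
    unfolding chu_zeros_def chu_tensor_def chuF_def prod.case case_prod_beta
    by (auto simp: smash_def split: option.split)
  also have "\<dots> = insert None (Some ` R)"
    using le_iff \<open>R \<subseteq> atoms \<times> atoms\<close> by auto
  finally show ?thesis .
qed

lemma not_proper_zero_sets_antichain_tensor:
  fixes R S :: "('a::complete_lattice \<times> 'b::complete_lattice) set"
  assumes R: "R \<in> tensor_coatoms" and S: "S \<in> tensor_coatoms" and "R \<subset> S"
  shows "\<not> proper_zero_sets_antichain (chu_tensor (chuF :: ('a, 'a) chu) (chuF :: ('b, 'b) chu))"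
proof
  assume antichain:
    "proper_zero_sets_antichain (chu_tensor (chuF :: ('a, 'a) chu) (chuF :: ('b, 'b) chu))"
  have "\<exists>t x0. chu_tensor (chuF :: ('a, 'a) chu) (chuF :: ('b, 'b) chu) =
      (insert None (Some ` (atoms \<times> atoms)), None, t, chu_hom chuF (chu_dual chuF), x0)"
    unfolding chu_tensor_def chuF_def prod.case smash_chuF by (intro exI) (rule refl)
  then obtain t x0 where tensor: "chu_tensor (chuF :: ('a, 'a) chu) (chuF :: ('b, 'b) chu) =
      (insert None (Some ` (atoms \<times> atoms)), None, t, chu_hom chuF (chu_dual chuF), x0)"
    by blast
  have "chu_zeros (chu_tensor chuF chuF) (relation_arrow R)
      \<subset> chu_zeros (chu_tensor chuF chuF) (relation_arrow S)"
    unfolding chu_zeros_tensor_relation_arrow[OF R] chu_zeros_tensor_relation_arrow[OF S]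
    using \<open>R \<subset> S\<close> by auto
  from proper_zero_sets_antichainD[OF antichain tensor
      relation_arrow_in_chu_hom[OF R] relation_arrow_in_chu_hom[OF S] this]
  have "insert None (Some ` S) = insert None (Some ` (atoms \<times> atoms))"
    unfolding chu_zeros_tensor_relation_arrow[OF S] .
  then have "Some ` S = Some ` (atoms \<times> atoms)"
    by (subst (asm) insert_ident) auto
  then have "S = atoms \<times> atoms"
    by (simp add: inj_image_eq_iff)
  with S show False
    by (simp add: tensor_coatoms_def)
qed

lemma not_chu_iso_chuF_tensor:
  fixes R S :: "('a::complete_lattice \<times> 'b::complete_lattice) set"
  assumes "atomistic TYPE('c::complete_lattice)"
    and "R \<in> tensor_coatoms" and "S \<in> tensor_coatoms" and "R \<subset> S"
  shows "\<not> chu_iso (chuF :: ('c, 'c) chu) (chu_tensor (chuF :: ('a, 'a) chu) (chuF :: ('b, 'b) chu))"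
  using assms chu_iso_proper_zero_sets_antichain proper_zero_sets_antichain_chuF
    not_proper_zero_sets_antichain_tensor by blast

lemma atoms_in_Cl: "atoms \<in> Cl (coatoms \<union> {top})"
  unfolding Cl_def using atoms_below_top by blast

lemma atoms_powerset: "(atoms :: 'a set set) = range (\<lambda>x. {x})"
proof -
  have "atom A \<longleftrightarrow> (\<exists>x. A = {x})" for A :: "'a set"
  proof
    assume A: "atom A"
    then obtain x where "x \<in> A" unfolding atom_def by auto
    with A have "{x} = A" unfolding atom_def bot_set_def by blast
    then show "\<exists>x. A = {x}" by blast
  qed (auto simp: atom_def subset_singleton_iff)
  then show ?thesis unfolding atoms_def by auto
qed

lemma coatoms_powerset: "(coatoms :: 'a set set) = range (\<lambda>x. - {x})"
proof -
  have "coatom A \<longleftrightarrow> (\<exists>x. A = - {x})" for A :: "'a set"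
  proof
    assume A: "coatom A"
    then obtain x where "x \<notin> A" unfolding coatom_def by auto
    then have "A \<subseteq> - {x}" by auto
    moreover have "- {x} \<noteq> (UNIV :: 'a set)" by auto
    ultimately have "- {x} = A" using A unfolding coatom_def top_set_def by blast
    then show "\<exists>x. A = - {x}" by blast
  next
    assume "\<exists>x. A = - {x}"
    then obtain x where "A = - {x}" by blast
    moreover have "B = UNIV \<or> B = - {x}" if "- {x} \<subseteq> B" for B :: "'a set"
      using that by (cases "x \<in> B") auto
    ultimately show "coatom A" unfolding coatom_def top_set_def by auto
  qed
  then show ?thesis unfolding coatoms_def by auto
qed

lemma atoms_minus_atom_in_Cl:
  assumes "p \<in> (atoms :: 'a set set)"
  shows "atoms - {p} \<in> Cl (coatoms \<union> {top})"
proof -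
  from assms obtain x where p: "p = {x}" by (auto simp: atoms_powerset)
  have "atoms_below (- {x}) = atoms - {p}"
    unfolding p atoms_below_def atoms_powerset by auto
  moreover have "- {x} \<in> coatoms" by (simp add: coatoms_powerset)
  ultimately show ?thesis unfolding Cl_def by blast
qed

lemma powerset_square_minus_diagonal_in_tensor_coatoms:
  fixes D :: "'a set set"
  assumes "D \<inter> atoms \<noteq> {}"
  shows "atoms \<times> atoms - Id_on D \<in> tensor_coatoms"
proof -
  let ?M = "atoms \<times> atoms - Id_on D"
  have row_eq_col: "{q. (p, q) \<in> ?M} = {q. (q, p) \<in> ?M}"
    and row_in_Cl: "{q. (p, q) \<in> ?M} \<in> Cl (coatoms \<union> {top})" if "p \<in> atoms" for p
  proof -
    have "{q. (p, q) \<in> ?M} = (if p \<in> D then atoms - {p} else atoms)"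
      and "{q. (q, p) \<in> ?M} = (if p \<in> D then atoms - {p} else atoms)"
      using that by auto
    then show "{q. (p, q) \<in> ?M} = {q. (q, p) \<in> ?M}"
      and "{q. (p, q) \<in> ?M} \<in> Cl (coatoms \<union> {top})"
      using atoms_in_Cl[where 'a = "'a set"] atoms_minus_atom_in_Cl[OF that] by simp_all
  qed
  have "?M \<noteq> atoms \<times> atoms"
    using assms by auto
  then show ?thesis
    unfolding tensor_coatoms_def using row_eq_col row_in_Cl by auto
qed

theorem mainTheorem11:
  fixes r0 :: 'a
  assumes "\<exists>x y :: 'a. x \<noteq> y"
  defines "R \<equiv> (\<Union>r \<in> (atoms :: 'a set set). {r} \<times> (atoms - {r}))"
  defines "S \<equiv> R \<union> ({{r0}} \<times> (atoms :: 'a set set))"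
  shows "R \<in> tensor_coatoms \<and> S \<in> tensor_coatoms \<and>
         R \<subset> S \<and> S \<subset> (atoms :: 'a set set) \<times> (atoms :: 'a set set) \<and>
         (atomistic TYPE('c::complete_lattice) \<and> coatomistic TYPE('c) \<longrightarrow>
          \<not> chu_iso (chuF :: ('c, 'c) chu)
               (chu_tensor (chuF :: ('a set, 'a set) chu) (chuF :: ('a set, 'a set) chu)))"
proof -
  obtain x :: 'a where "x \<noteq> r0" using assms(1) by metis
  have r0: "{r0} \<in> (atoms :: 'a set set)" and x: "{x} \<in> (atoms :: 'a set set)"
    by (auto simp: atoms_powerset)
  have R_eq: "R = atoms \<times> atoms - Id_on atoms"
    unfolding R_def Id_on_def by blast
  have S_eq: "S = atoms \<times> atoms - Id_on (atoms - {{r0}})"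
    unfolding S_def R_eq using r0 by auto
  have R: "R \<in> tensor_coatoms"
    unfolding R_eq using x by (intro powerset_square_minus_diagonal_in_tensor_coatoms) auto
  have S: "S \<in> tensor_coatoms"
    unfolding S_eq using x \<open>x \<noteq> r0\<close> by (intro powerset_square_minus_diagonal_in_tensor_coatoms) auto
  have "R \<subset> S"
    unfolding R_eq S_eq using r0 by auto
  moreover have "S \<subset> atoms \<times> atoms"
    using S by (auto simp: tensor_coatoms_def)
  ultimately show ?thesis
    using R S not_chu_iso_chuF_tensor[OF _ R S] by blast
qed

end
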